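(* Let $\mathbb{K}$ be a field of characteristic $0$ and let $G$ be a subgroup of the symmetric group $\Sigma_3$. Let $(A,\mu)$ be a $G$-associative algebra over $\mathbb{K}$ and let $\alpha \colon A \to A$ be a linear map such that $\alpha \circ \mu = \mu \circ \alpha^{\otimes 2}$. Then $(A,\mu_\alpha = \alpha \circ \mu,\alpha)$ is a $G$-Hom-associative algebra. Moreover, $\alpha$ is multiplicative with respect to $\mu_\alpha$, i.e., $\alpha \circ \mu_\alpha = \mu_\alpha \circ \alpha^{\otimes 2}$. Suppose further that $(B,\mu')$ is another $G$-associative algebra and that $\alpha' \colon B \to B$ is a linear map such that $\alpha' \circ \mu' = \mu' \circ \alpha'^{\otimes 2}$. If $f \colon A \to B$ is a linear map with $f \circ \mu = \mu' \circ f^{\otimes 2}$ and $f \circ \alpha = \alpha' \circ f$, then $f \colon (A,\mu_\alpha,\alpha) \to (B,\mu'_{\alpha'} = \alpha' \circ \mu',\alpha')$ is a morphism of $G$-Hom-associative algebras.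
   Context: All vector spaces and (multi)linear maps are over a fixed field $\mathbb{K}$ of characteristic $0$. For $G \subseteq \Sigma_3$ a subgroup, a $G$-Hom-associative algebra is a triple $(A,\mu,\alpha)$ with $A$ a vector space, $\mu \colon A \otimes A \to A$ bilinear (written $\mu(x,y) = xy$) and $\alpha \colon A \to A$ linear (not required to be multiplicative), such that for all $x_1,x_2,x_3 \in A$: $$\sum_{\sigma \in G} (-1)^{\varepsilon(\sigma)} \left\{(x_{\sigma(1)}x_{\sigma(2)})\alpha(x_{\sigma(3)}) - \alpha(x_{\sigma(1)})(x_{\sigma(2)}x_{\sigma(3)})\right\} = 0,$$ where $\varepsilon(\sigma)$ denotes the signature of $\sigma$. A $G$-associative algebra is a (not necessarily associative) algebra $(A,\mu)$ satisfying this identity with $\alpha = \mathrm{Id}_A$. A morphism $f \colon (A,\mu_A,\alpha_A) \to (B,\mu_B,\alpha_B)$ of $G$-Hom-associative algebras is a linear map $f \colon A \to B$ with $f \circ \alpha_A = \alpha_B \circ f$ and $f \circ \mu_A = \mu_B \circ f^{\otimes 2}$. *)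

theory Defs
  imports Complex_Main "HOL-Combinatorics.Permutations"
begin

definition subgroup_S3 :: "(nat \<Rightarrow> nat) set \<Rightarrow> bool" where
  "subgroup_S3 G \<longleftrightarrow> G \<subseteq> {\<sigma>. \<sigma> permutes {1,2,3}} \<and> id \<in> G \<and>
     (\<forall>\<sigma>\<in>G. \<forall>\<tau>\<in>G. \<sigma> \<circ> \<tau> \<in> G) \<and> (\<forall>\<sigma>\<in>G. inv \<sigma> \<in> G)"

definition bilinear_map ::
  "('k::field \<Rightarrow> 'v::ab_group_add \<Rightarrow> 'v) \<Rightarrow> ('v \<Rightarrow> 'v \<Rightarrow> 'v) \<Rightarrow> bool" where
  "bilinear_map scale mu \<longleftrightarrow>
     (\<forall>x. Vector_Spaces.linear scale scale (mu x)) \<and>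
     (\<forall>y. Vector_Spaces.linear scale scale (\<lambda>x. mu x y))"

definition G_hom_assoc_identity ::
  "('k::field \<Rightarrow> 'v::ab_group_add \<Rightarrow> 'v) \<Rightarrow> (nat \<Rightarrow> nat) set \<Rightarrow> ('v \<Rightarrow> 'v \<Rightarrow> 'v) \<Rightarrow> ('v \<Rightarrow> 'v) \<Rightarrow> bool" where
  "G_hom_assoc_identity scale G mu alpha \<longleftrightarrow>
     (\<forall>x1 x2 x3. let x = (\<lambda>i::nat. if i = 1 then x1 else if i = 2 then x2 else x3) in
        (\<Sum>\<sigma>\<in>G. scale (of_int (sign \<sigma>))
            (mu (mu (x (\<sigma> 1)) (x (\<sigma> 2))) (alpha (x (\<sigma> 3)))
             - mu (alpha (x (\<sigma> 1))) (mu (x (\<sigma> 2)) (x (\<sigma> 3))))) = 0)"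

definition G_hom_assoc_algebra ::
  "('k::field \<Rightarrow> 'v::ab_group_add \<Rightarrow> 'v) \<Rightarrow> (nat \<Rightarrow> nat) set \<Rightarrow> ('v \<Rightarrow> 'v \<Rightarrow> 'v) \<Rightarrow> ('v \<Rightarrow> 'v) \<Rightarrow> bool" where
  "G_hom_assoc_algebra scale G mu alpha \<longleftrightarrow>
     vector_space scale \<and> bilinear_map scale mu \<and> Vector_Spaces.linear scale scale alpha \<and>
     G_hom_assoc_identity scale G mu alpha"

definition G_assoc_algebra ::
  "('k::field \<Rightarrow> 'v::ab_group_add \<Rightarrow> 'v) \<Rightarrow> (nat \<Rightarrow> nat) set \<Rightarrow> ('v \<Rightarrow> 'v \<Rightarrow> 'v) \<Rightarrow> bool" where
  "G_assoc_algebra scale G mu \<longleftrightarrow>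
     vector_space scale \<and> bilinear_map scale mu \<and> G_hom_assoc_identity scale G mu id"

definition G_hom_assoc_morphism ::
  "('k::field \<Rightarrow> 'v::ab_group_add \<Rightarrow> 'v) \<Rightarrow> ('v \<Rightarrow> 'v \<Rightarrow> 'v) \<Rightarrow> ('v \<Rightarrow> 'v) \<Rightarrow>
   ('k \<Rightarrow> 'w::ab_group_add \<Rightarrow> 'w) \<Rightarrow> ('w \<Rightarrow> 'w \<Rightarrow> 'w) \<Rightarrow> ('w \<Rightarrow> 'w) \<Rightarrow> ('v \<Rightarrow> 'w) \<Rightarrow> bool" where
  "G_hom_assoc_morphism scaleA muA alphaA scaleB muB alphaB f \<longleftrightarrow>
     Vector_Spaces.linear scaleA scaleB f \<and> f \<circ> alphaA = alphaB \<circ> f \<and>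
     (\<forall>x y. f (muA x y) = muB (f x) (f y))"

end

theory Submission
  imports Defs
begin

text \<open>Twisting by a multiplicative linear map \<open>\<alpha>\<close>: with \<open>\<mu>\<^sub>\<alpha> = \<alpha> \<circ> \<mu>\<close>, each term
  \<open>\<mu>\<^sub>\<alpha>(\<mu>\<^sub>\<alpha>(x, y), \<alpha> z)\<close> equals \<open>\<alpha>\<^sup>2(\<mu>(\<mu>(x, y), z))\<close>, and likewise for the other
  bracketing. Hence the \<open>G\<close>-Hom-associator of \<open>(\<mu>\<^sub>\<alpha>, \<alpha>)\<close> is \<open>\<alpha>\<^sup>2\<close> applied to the
  \<open>G\<close>-associator of \<open>\<mu>\<close>, which vanishes. Neither the group structure of \<open>G\<close> nor the
  characteristic of the field plays a role.\<close>

lemma bilinear_map_compose_linear: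
  assumes "bilinear_map scale mu" and "Vector_Spaces.linear scale scale g"
  shows "bilinear_map scale (\<lambda>x y. g (mu x y))"
  using assms Vector_Spaces.linear_compose[of scale scale _ scale g]
  unfolding bilinear_map_def comp_def by blast

lemma linear_signed_sum_diff:
  assumes "Vector_Spaces.linear scale scale h"
  shows "h (\<Sum>\<sigma>\<in>G. scale (c \<sigma>) (u \<sigma> - v \<sigma>)) = (\<Sum>\<sigma>\<in>G. scale (c \<sigma>) (h (u \<sigma>) - h (v \<sigma>)))"
  using assms by (simp add: linear_iff_module_hom module_hom.sum module_hom.scale module_hom.diff)

lemma G_hom_assoc_identity_twist:
  fixes scale :: "'k::field \<Rightarrow> 'v::ab_group_add \<Rightarrow> 'v"
  assumes assoc: "G_hom_assoc_identity scale G mu id"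
    and lin: "Vector_Spaces.linear scale scale alpha"
    and mult: "\<And>x y. alpha (mu x y) = mu (alpha x) (alpha y)"
  shows "G_hom_assoc_identity scale G (\<lambda>x y. alpha (mu x y)) alpha"
  unfolding G_hom_assoc_identity_def Let_def
proof (intro allI)
  fix x1 x2 x3 :: 'v
  define x where "x = (\<lambda>i::nat. if i = 1 then x1 else if i = 2 then x2 else x3)"
  let ?c = "\<lambda>\<sigma>. of_int (sign \<sigma>)"
  have lin2: "Vector_Spaces.linear scale scale (alpha \<circ> alpha)"
    using lin Vector_Spaces.linear_compose by blast
  have "(\<Sum>\<sigma>\<in>G. scale (?c \<sigma>)
            (alpha (mu (alpha (mu (x (\<sigma> 1)) (x (\<sigma> 2)))) (alpha (x (\<sigma> 3))))
             - alpha (mu (alpha (x (\<sigma> 1))) (alpha (mu (x (\<sigma> 2)) (x (\<sigma> 3)))))))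
      = (\<Sum>\<sigma>\<in>G. scale (?c \<sigma>)
            ((alpha \<circ> alpha) (mu (mu (x (\<sigma> 1)) (x (\<sigma> 2))) (x (\<sigma> 3)))
             - (alpha \<circ> alpha) (mu (x (\<sigma> 1)) (mu (x (\<sigma> 2)) (x (\<sigma> 3))))))"
    by (simp add: mult)
  also have "\<dots> = (alpha \<circ> alpha) (\<Sum>\<sigma>\<in>G. scale (?c \<sigma>)
            (mu (mu (x (\<sigma> 1)) (x (\<sigma> 2))) (x (\<sigma> 3))
             - mu (x (\<sigma> 1)) (mu (x (\<sigma> 2)) (x (\<sigma> 3)))))"
    using linear_signed_sum_diff[OF lin2] by metis
  also have "\<dots> = (alpha \<circ> alpha) 0"
    using assoc unfolding G_hom_assoc_identity_def Let_def x_def by simp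
  also have "\<dots> = 0"
    using lin2 by (metis linear_iff_module_hom module_hom.zero)
  finally show "(\<Sum>\<sigma>\<in>G. scale (?c \<sigma>)
            (alpha (mu (alpha (mu (x (\<sigma> 1)) (x (\<sigma> 2)))) (alpha (x (\<sigma> 3))))
             - alpha (mu (alpha (x (\<sigma> 1))) (alpha (mu (x (\<sigma> 2)) (x (\<sigma> 3))))))) = 0" .
qed

lemma G_hom_assoc_algebra_twist:
  assumes "G_assoc_algebra scale G mu"
    and "Vector_Spaces.linear scale scale alpha"
    and "\<And>x y. alpha (mu x y) = mu (alpha x) (alpha y)"
  shows "G_hom_assoc_algebra scale G (\<lambda>x y. alpha (mu x y)) alpha"
  using assms bilinear_map_compose_linear G_hom_assoc_identity_twist
  unfolding G_assoc_algebra_def G_hom_assoc_algebra_def by blast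

lemma G_hom_assoc_morphism_twist:
  assumes "Vector_Spaces.linear scaleA scaleB f"
    and "f \<circ> alpha = alpha' \<circ> f"
    and "\<And>x y. f (mu x y) = mu' (f x) (f y)"
  shows "G_hom_assoc_morphism scaleA (\<lambda>x y. alpha (mu x y)) alpha
           scaleB (\<lambda>x y. alpha' (mu' x y)) alpha' f"
  using assms unfolding G_hom_assoc_morphism_def by (simp add: fun_eq_iff)

theorem theorem2p1:
  fixes scaleA :: "'k::field_char_0 \<Rightarrow> 'a::ab_group_add \<Rightarrow> 'a"
    and scaleB :: "'k \<Rightarrow> 'b::ab_group_add \<Rightarrow> 'b"
    and G :: "(nat \<Rightarrow> nat) set"
    and mu :: "'a \<Rightarrow> 'a \<Rightarrow> 'a" and alpha :: "'a \<Rightarrow> 'a"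
    and mu' :: "'b \<Rightarrow> 'b \<Rightarrow> 'b" and alpha' :: "'b \<Rightarrow> 'b"
    and f :: "'a \<Rightarrow> 'b"
  assumes G: "subgroup_S3 G"
    and A: "G_assoc_algebra scaleA G mu"
    and alpha_lin: "Vector_Spaces.linear scaleA scaleA alpha"
    and alpha_mult: "\<forall>x y. alpha (mu x y) = mu (alpha x) (alpha y)"
  shows "G_hom_assoc_algebra scaleA G (\<lambda>x y. alpha (mu x y)) alpha
       \<and> (\<forall>x y. alpha (alpha (mu x y)) = alpha (mu (alpha x) (alpha y)))
       \<and> ((G_assoc_algebra scaleB G mu' \<and>
           Vector_Spaces.linear scaleB scaleB alpha' \<and>
           (\<forall>x y. alpha' (mu' x y) = mu' (alpha' x) (alpha' y)) \<and>
           Vector_Spaces.linear scaleA scaleB f \<and>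
           (\<forall>x y. f (mu x y) = mu' (f x) (f y)) \<and>
           f \<circ> alpha = alpha' \<circ> f)
         \<longrightarrow> G_hom_assoc_morphism scaleA (\<lambda>x y. alpha (mu x y)) alpha
               scaleB (\<lambda>x y. alpha' (mu' x y)) alpha' f)"
proof (intro conjI impI allI)
  show "G_hom_assoc_algebra scaleA G (\<lambda>x y. alpha (mu x y)) alpha"
    using G_hom_assoc_algebra_twist[OF A alpha_lin] alpha_mult by blast
next
  fix x y
  show "alpha (alpha (mu x y)) = alpha (mu (alpha x) (alpha y))"
    using alpha_mult by simp
next
  assume "G_assoc_algebra scaleB G mu' \<and> Vector_Spaces.linear scaleB scaleB alpha' \<and>
    (\<forall>x y. alpha' (mu' x y) = mu' (alpha' x) (alpha' y)) \<and>
    Vector_Spaces.linear scaleA scaleB f \<and> (\<forall>x y. f (mu x y) = mu' (f x) (f y)) \<and>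
    f \<circ> alpha = alpha' \<circ> f"
  then show "G_hom_assoc_morphism scaleA (\<lambda>x y. alpha (mu x y)) alpha
               scaleB (\<lambda>x y. alpha' (mu' x y)) alpha' f"
    using G_hom_assoc_morphism_twist by blast
qed

end
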